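(* Let $M,N\in\mathbf K_{\rm fnq}$ with $M\le_2N$, and let $c\in Q^M$ and $a\in P^M$. Then the equivalence class $a/E^N_c$ is included in $M$.
   Context: $\mathbf K_{\rm fnq}$ is the class of structures $M$ in the vocabulary consisting of unary predicates $P,Q$, a ternary relation $E$, and $n$-ary relations $Q_{n,k}$ ($n,k\ge1$), such that: (a) $P^M,Q^M$ partition the universe of $M$ and $P^M\neq\emptyset$; (b) $E^M\subseteq P^M\times P^M\times Q^M$, written $aE^M_cb$ for $(a,b,c)\in E^M$; (c) for $c\in Q^M$, $E^M_c$ is an equivalence relation on $P^M$ with $\sup\{|a/E^M_c|:a\in P^M\}$ finite; (d) $Q^M_{n,k}\subseteq(Q^M)^n$; (e) for $\bar c=\langle c_\ell:\ell<n\rangle\in{}^n(Q^M)$, $E^M_{\bar c}$ is the equivalence relation on $P^M$ generated by $\bigcup_\ell E^M_{c_\ell}$; (f) ${}^n(Q^M)=\bigcup_{k\ge1}Q^M_{n,k}$; (g) if $\bar c\in Q^M_{n,k}$ then $|a/E^M_{\bar c}|\le k$ for all $a\in P^M$. For $M,N\in\mathbf K_{\rm fnq}$: $M\le_2N$ iff $M$ is a substructure of $N$ and for every finite $A\subseteq N$ there is a one-to-one homomorphism from $N{\restriction}A$ into $M$ which is the identity on $A\cap M$. *)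

theory Defs
  imports Main
begin

text \<open>Q_{n,k} is represented by sets of lists of length n; tuples with n = 0
  or k = 0 are not part of the vocabulary and are required to be empty.\<close>

record 'a fnq_struct =
  univ :: "'a set"
  Pr :: "'a set"
  Qr :: "'a set"
  Er :: "'a \<Rightarrow> 'a \<Rightarrow> 'a \<Rightarrow> bool"   (* Er a b c  means  a E_c b *)
  Qnk :: "nat \<Rightarrow> nat \<Rightarrow> 'a list set"

definition Erel :: "('a, 'b) fnq_struct_scheme \<Rightarrow> 'a \<Rightarrow> ('a \<times> 'a) set" where
  "Erel M c = {(a, b). Er M a b c}"

definition Etuple :: "('a, 'b) fnq_struct_scheme \<Rightarrow> 'a list \<Rightarrow> ('a \<times> 'a) set" where
  "Etuple M cs = (let R = (\<Union>c\<in>set cs. Erel M c) in (Id_on (Pr M) \<union> R \<union> R\<inverse>)\<^sup>+)"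

definition eclass :: "('a \<times> 'a) set \<Rightarrow> 'a \<Rightarrow> 'a set" where
  "eclass R a = {b. (a, b) \<in> R}"

definition K_fnq :: "('a, 'b) fnq_struct_scheme \<Rightarrow> bool" where
  "K_fnq M \<longleftrightarrow>
     \<comment> \<open>(a)\<close>
     Pr M \<union> Qr M = univ M \<and> Pr M \<inter> Qr M = {} \<and> Pr M \<noteq> {} \<and>
     \<comment> \<open>(b)\<close>
     (\<forall>a b c. Er M a b c \<longrightarrow> a \<in> Pr M \<and> b \<in> Pr M \<and> c \<in> Qr M) \<and>
     \<comment> \<open>(c)\<close>
     (\<forall>c\<in>Qr M. equiv (Pr M) (Erel M c) \<and>
        (\<exists>k::nat. \<forall>a\<in>Pr M. finite (eclass (Erel M c) a) \<and> card (eclass (Erel M c) a) \<le> k)) \<and>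
     \<comment> \<open>(d), and only indices n,k >= 1 occur\<close>
     (\<forall>n k. Qnk M n k \<subseteq> {cs. length cs = n \<and> set cs \<subseteq> Qr M}) \<and>
     (\<forall>n k. (n = 0 \<or> k = 0) \<longrightarrow> Qnk M n k = {}) \<and>
     \<comment> \<open>(f)\<close>
     (\<forall>n\<ge>1. \<forall>cs. length cs = n \<and> set cs \<subseteq> Qr M \<longrightarrow> (\<exists>k\<ge>1. cs \<in> Qnk M n k)) \<and>
     \<comment> \<open>(g)\<close>
     (\<forall>n k cs. cs \<in> Qnk M n k \<longrightarrow>
        (\<forall>a\<in>Pr M. finite (eclass (Etuple M cs) a) \<and> card (eclass (Etuple M cs) a) \<le> k))"

definition substructure :: "('a, 'b) fnq_struct_scheme \<Rightarrow> ('a, 'b) fnq_struct_scheme \<Rightarrow> bool" where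
  "substructure M N \<longleftrightarrow>
     univ M \<subseteq> univ N \<and>
     Pr M = Pr N \<inter> univ M \<and> Qr M = Qr N \<inter> univ M \<and>
     (\<forall>a b c. Er M a b c \<longleftrightarrow> Er N a b c \<and> a \<in> univ M \<and> b \<in> univ M \<and> c \<in> univ M) \<and>
     (\<forall>n k. Qnk M n k = {cs \<in> Qnk N n k. set cs \<subseteq> univ M})"

definition inj_hom_restr ::
  "('a \<Rightarrow> 'a) \<Rightarrow> ('a, 'b) fnq_struct_scheme \<Rightarrow> 'a set \<Rightarrow> ('a, 'b) fnq_struct_scheme \<Rightarrow> bool" where
  "inj_hom_restr f N A M \<longleftrightarrow>
     f ` A \<subseteq> univ M \<and> inj_on f A \<and>
     (\<forall>a\<in>A. a \<in> Pr N \<longrightarrow> f a \<in> Pr M) \<and>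
     (\<forall>a\<in>A. a \<in> Qr N \<longrightarrow> f a \<in> Qr M) \<and>
     (\<forall>a\<in>A. \<forall>b\<in>A. \<forall>c\<in>A. Er N a b c \<longrightarrow> Er M (f a) (f b) (f c)) \<and>
     (\<forall>n k cs. cs \<in> Qnk N n k \<and> set cs \<subseteq> A \<longrightarrow> map f cs \<in> Qnk M n k)"

definition le2 :: "('a, 'b) fnq_struct_scheme \<Rightarrow> ('a, 'b) fnq_struct_scheme \<Rightarrow> bool" where
  "le2 M N \<longleftrightarrow> substructure M N \<and>
     (\<forall>A. finite A \<and> A \<subseteq> univ N \<longrightarrow>
        (\<exists>f. inj_hom_restr f N A M \<and> (\<forall>a\<in>A \<inter> univ M. f a = a)))"

end

theory Submission
  imports Defs
begin

text \<open>Let X be the finite class a/E^M_c and b an element of a/E^N_c. Embed the finite set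
  {a, b, c} \<union> X into M by a one-to-one homomorphism f fixing its part inside M. Then f b is
  E^M_c-equivalent to f a = a, so f b \<in> X; as f also fixes f b, injectivity gives b = f b \<in> X.
  Hence a/E^N_c \<subseteq> a/E^M_c \<subseteq> M.\<close>

lemma K_fnq_univ_eq:
  assumes "K_fnq M"
  shows "univ M = Pr M \<union> Qr M"
  using assms unfolding K_fnq_def by simp

lemma K_fnq_Er_in_univ:
  assumes "K_fnq M" and "Er M a b c"
  shows "a \<in> univ M" "b \<in> univ M" "c \<in> univ M"
proof -
  have "a \<in> Pr M \<and> b \<in> Pr M \<and> c \<in> Qr M"
    using assms unfolding K_fnq_def by simp
  then show "a \<in> univ M" "b \<in> univ M" "c \<in> univ M"
    by (simp_all add: K_fnq_univ_eq[OF assms(1)])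
qed

lemma K_fnq_eclass_Erel_subset_univ:
  assumes "K_fnq M"
  shows "eclass (Erel M c) a \<subseteq> univ M"
  using K_fnq_Er_in_univ[OF assms] by (auto simp: eclass_def Erel_def)

lemma K_fnq_finite_eclass_Erel:
  assumes "K_fnq M" and "c \<in> Qr M" and "a \<in> Pr M"
  shows "finite (eclass (Erel M c) a)"
proof -
  have "\<exists>k::nat. \<forall>a\<in>Pr M. finite (eclass (Erel M c) a) \<and> card (eclass (Erel M c) a) \<le> k"
    using assms(1,2) unfolding K_fnq_def by simp
  then show ?thesis using assms(3) by blast
qed

lemma inj_hom_restr_Er:
  assumes "inj_hom_restr f N A M" and "a \<in> A" "b \<in> A" "c \<in> A" and "Er N a b c"
  shows "Er M (f a) (f b) (f c)"
proof -
  have "\<forall>a\<in>A. \<forall>b\<in>A. \<forall>c\<in>A. Er N a b c \<longrightarrow> Er M (f a) (f b) (f c)"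
    using assms(1) unfolding inj_hom_restr_def by simp
  then show ?thesis using assms(2-5) by blast
qed

lemma le2_obtain_inj_hom:
  assumes "le2 M N" and "finite A" and "A \<subseteq> univ N"
  obtains f where "inj_hom_restr f N A M" and "\<And>x. x \<in> A \<Longrightarrow> x \<in> univ M \<Longrightarrow> f x = x"
proof -
  have "\<exists>f. inj_hom_restr f N A M \<and> (\<forall>a\<in>A \<inter> univ M. f a = a)"
    using assms unfolding le2_def by simp
  then show ?thesis using that by blast
qed

lemma inj_on_mem_if_image_fixed:
  assumes "inj_on f A" and "B \<subseteq> A" and "\<And>x. x \<in> B \<Longrightarrow> f x = x"
    and "b \<in> A" and "f b \<in> B"
  shows "b \<in> B"
proof -
  have "f (f b) = f b" using assms(3,5) by blast
  then have "f b = b" using assms(1,2,4,5) by (blast dest: inj_onD)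
  then show ?thesis using assms(5) by simp
qed

lemma le2_eclass_Erel_subset:
  fixes M N :: "('a, 'b) fnq_struct_scheme"
  assumes KM: "K_fnq M" and KN: "K_fnq N" and le: "le2 M N"
    and c: "c \<in> Qr M" and a: "a \<in> Pr M"
  shows "eclass (Erel N c) a \<subseteq> eclass (Erel M c) a"
proof
  fix b assume "b \<in> eclass (Erel N c) a"
  then have Eb: "Er N a b c" by (simp add: eclass_def Erel_def)
  define X where "X = eclass (Erel M c) a"
  define A where "A = {a, b, c} \<union> X"
  have XM: "X \<subseteq> univ M"
    unfolding X_def by (rule K_fnq_eclass_Erel_subset_univ[OF KM])
  have aM: "a \<in> univ M" and cM: "c \<in> univ M"
    using a c by (simp_all add: K_fnq_univ_eq[OF KM])
  have MN: "univ M \<subseteq> univ N"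
    using le by (simp add: le2_def substructure_def)
  have "finite A"
    unfolding A_def X_def using K_fnq_finite_eclass_Erel[OF KM c a] by simp
  moreover have "A \<subseteq> univ N"
    unfolding A_def using XM aM cM MN K_fnq_Er_in_univ(2)[OF KN Eb] by blast
  ultimately obtain f where hom: "inj_hom_restr f N A M"
    and fix_M: "\<And>x. x \<in> A \<Longrightarrow> x \<in> univ M \<Longrightarrow> f x = x"
    using le2_obtain_inj_hom[OF le] by blast
  have "Er M (f a) (f b) (f c)"
    using inj_hom_restr_Er[OF hom _ _ _ Eb] unfolding A_def by blast
  then have "f b \<in> X"
    using fix_M aM cM unfolding A_def X_def by (simp add: eclass_def Erel_def)
  moreover have "inj_on f A"
    using hom by (simp add: inj_hom_restr_def)
  moreover have "X \<subseteq> A" and "\<And>x. x \<in> X \<Longrightarrow> f x = x"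
    using fix_M XM unfolding A_def by blast+
  ultimately show "b \<in> eclass (Erel M c) a"
    using inj_on_mem_if_image_fixed[of f A X b] unfolding A_def X_def by blast
qed

theorem claim3p3:
  fixes M N :: "'a fnq_struct"
  assumes "K_fnq M" and "K_fnq N" and "le2 M N"
    and "c \<in> Qr M" and "a \<in> Pr M"
  shows "eclass (Erel N c) a \<subseteq> univ M"
  using le2_eclass_Erel_subset[OF assms] K_fnq_eclass_Erel_subset_univ[OF assms(1)]
  by (rule subset_trans)

end
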